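(* Let $f:\mathbb{R}^d\to\mathbb{R}$ be convex, twice continuously differentiable with $\nabla^2 f(x)\succ0$ for all $x$, and $L_{\text{semi}}$-semi-strongly self-concordant; let $L_{\text{est}}\ge L_{\text{semi}}$; let $x_0\in\mathbb{R}^d$ and assume $f$ has a unique minimizer $x_*$ and the level set $\mathcal L(x_0)=\{x:f(x)\le f(x_0)\}$ is bounded. Let $(x_t)$ be the AICN iterates from $x_0$. Then for every $k\ge1$, $$f(x_{k+1})-f(x_* )\le\frac{9L_{\text{est}}D^3}{k^2}\le\frac{9L_{\text{est}}R^3}{k^2},$$ where $D=\max_{0\le t\le k+1}\|x_t-x_*\|_{x_t}$ and $R=\sup_{x\in\mathcal L(x_0)}\big(\|x-x_*\|_{x_*}^2+L_{\text{est}}\|x-x_*\|_{x_*}^3\big)^{1/2}$.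
   Context: Local norms: $\|h\|_x=\langle\nabla^2 f(x)h,h\rangle^{1/2}$, $\|g\|_x^*=\langle g,[\nabla^2 f(x)]^{-1}g\rangle^{1/2}$; $\|H\|_{op}=\sup_{v\neq0}\|Hv\|_x^*/\|v\|_x$ at base point $x$. $f$ is $L_{\text{semi}}$-semi-strongly self-concordant if $\|\nabla^2 f(y)-\nabla^2 f(x)\|_{op}\le L_{\text{semi}}\|y-x\|_x$ for all $x,y$ (operator norm at base point $x$). AICN (Affine-Invariant Cubic Newton) with parameter $L_{\text{est}}>0$ from $x_0$: $x_{k+1}=x_k-\alpha_k[\nabla^2 f(x_k)]^{-1}\nabla f(x_k)$ with $\alpha_k=\frac{-1+\sqrt{1+2L_{\text{est}}\|\nabla f(x_k)\|_{x_k}^*}}{L_{\text{est}}\|\nabla f(x_k)\|_{x_k}^*}$ (and $\alpha_k:=1$ if $\nabla f(x_k)=0$, so then $x_{k+1}=x_k$). *)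

theory Defs
  imports "HOL-Analysis.Analysis"
begin

text \<open>Hessian is given as a matrix-valued function H :: real^'n \<Rightarrow> real^'n^'n.\<close>

definition loc_norm :: "(real^'n \<Rightarrow> real^'n^'n) \<Rightarrow> real^'n \<Rightarrow> real^'n \<Rightarrow> real" where
  "loc_norm H x h = sqrt (h \<bullet> (H x *v h))"

definition dual_norm :: "(real^'n \<Rightarrow> real^'n^'n) \<Rightarrow> real^'n \<Rightarrow> real^'n \<Rightarrow> real" where
  "dual_norm H x g = sqrt (g \<bullet> (matrix_inv (H x) *v g))"

definition op_norm :: "(real^'n \<Rightarrow> real^'n^'n) \<Rightarrow> real^'n \<Rightarrow> real^'n^'n \<Rightarrow> real" where
  "op_norm H x M = (SUP v\<in>{v. v \<noteq> 0}. dual_norm H x (M *v v) / loc_norm H x v)"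

definition semi_strongly_sc :: "(real^'n \<Rightarrow> real^'n^'n) \<Rightarrow> real \<Rightarrow> bool" where
  "semi_strongly_sc H L \<longleftrightarrow> (\<forall>x y. op_norm H x (H y - H x) \<le> L * loc_norm H x (y - x))"

definition aicn_alpha :: "(real^'n \<Rightarrow> real^'n) \<Rightarrow> (real^'n \<Rightarrow> real^'n^'n) \<Rightarrow> real \<Rightarrow> real^'n \<Rightarrow> real" where
  "aicn_alpha G H L x =
     (if G x = 0 then 1
      else (-1 + sqrt (1 + 2 * L * dual_norm H x (G x))) / (L * dual_norm H x (G x)))"

definition aicn_step :: "(real^'n \<Rightarrow> real^'n) \<Rightarrow> (real^'n \<Rightarrow> real^'n^'n) \<Rightarrow> real \<Rightarrow> real^'n \<Rightarrow> real^'n" where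
  "aicn_step G H L x = x - aicn_alpha G H L x *\<^sub>R (matrix_inv (H x) *v G x)"

fun aicn :: "(real^'n \<Rightarrow> real^'n) \<Rightarrow> (real^'n \<Rightarrow> real^'n^'n) \<Rightarrow> real \<Rightarrow> real^'n \<Rightarrow> nat \<Rightarrow> real^'n" where
  "aicn G H L x0 0 = x0"
| "aicn G H L x0 (Suc k) = aicn_step G H L (aicn G H L x0 k)"

end

theory Submission
  imports Defs
begin

(* Semi-strong self-concordance yields the two-sided cubic Taylor estimate
     |f (x + h) - f x - <G x, h> - |h|_x^2 / 2| <= L |h|_x^3 / 6
   in the local norm of x. The AICN step minimises the resulting upper cubic model, so it
   does at least as well as the model at h = eta (y - x) for every eta in [0, 1]. Together
   with the lower estimate and convexity this gives
     f x_(t+1) - f y <= (1 - eta) (f x_t - f y) + eta^3 L D^3 / 3,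
   and the choice eta = 3 / (t + 2) turns this recursion into the rate 27 (L D^3 / 3) / (t + 1)^2.
   For the second inequality, self-concordance bounds the local norm at x_t by the local
   norm at xs, and the iterates never leave the initial level set since AICN is monotone. *)

lemma cubic_taylor_upper_bound:
  fixes p p' p'' :: "real \<Rightarrow> real"
  assumes p: "\<And>t. (p has_real_derivative p' t) (at t)"
    and p': "\<And>t. (p' has_real_derivative p'' t) (at t)"
    and p'': "\<And>t. t \<in> {0..1} \<Longrightarrow> p'' t \<le> Q + B * t"
  shows "p 1 \<le> p 0 + p' 0 + Q / 2 + B / 6"
proof -
  define q' where "q' t = p' t - p' 0 - Q * t - B * t^2 / 2" for t
  define q where "q t = p t - p 0 - p' 0 * t - Q * t^2 / 2 - B * t^3 / 6" for t
  have q': "(q' has_real_derivative (p'' t - Q - B * t)) (at t)" for t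
    unfolding q'_def [abs_def] by (rule derivative_eq_intros p' refl | simp)+
  have q: "(q has_real_derivative q' t) (at t)" for t
    unfolding q_def [abs_def] q'_def by (rule derivative_eq_intros p refl | simp)+
  have q'_nonpos: "q' t \<le> 0" if "t \<in> {0..1}" for t
  proof -
    have "q' t \<le> q' 0"
      by (rule deriv_nonpos_imp_antimono [OF q']) (use that p'' in force)+
    then show ?thesis
      by (simp add: q'_def)
  qed
  have "q 1 \<le> q 0"
    by (rule deriv_nonpos_imp_antimono [OF q]) (auto intro: q'_nonpos)
  then show ?thesis
    by (simp add: q_def)
qed

lemma cubic_taylor_bound:
  fixes p p' p'' :: "real \<Rightarrow> real"
  assumes p: "\<And>t. (p has_real_derivative p' t) (at t)"
    and p': "\<And>t. (p' has_real_derivative p'' t) (at t)"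
    and p'': "\<And>t. t \<in> {0..1} \<Longrightarrow> \<bar>p'' t - Q\<bar> \<le> B * t"
  shows "\<bar>p 1 - p 0 - p' 0 - Q / 2\<bar> \<le> B / 6"
proof -
  have "p 1 \<le> p 0 + p' 0 + Q / 2 + B / 6"
    by (rule cubic_taylor_upper_bound [OF p p']) (use p'' in force)
  moreover have "- p 1 \<le> - p 0 + - p' 0 + (- Q) / 2 + B / 6"
    by (rule cubic_taylor_upper_bound [where p'' = "\<lambda>t. - p'' t"])
      (use p p' p'' in \<open>force intro: derivative_intros\<close>)+
  ultimately show ?thesis
    by linarith
qed

lemma cubic_model_minimum:
  fixes L s r r' :: real
  assumes "L \<ge> 0" "r \<ge> 0" "r' \<ge> 0" and stationary: "s = r + L * r^2 / 2"
  shows "- s * r + r^2 / 2 + L * r^3 / 6 \<le> - s * r' + r'^2 / 2 + L * r'^3 / 6"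
proof -
  have "(- s * r' + r'^2 / 2 + L * r'^3 / 6) - (- s * r + r^2 / 2 + L * r^3 / 6)
      = (r' - r)^2 * (1 / 2 + L / 6 * (r' + 2 * r))"
    unfolding stationary by (simp add: field_simps power2_eq_square power3_eq_cube)
  also have "\<dots> \<ge> 0"
    using assms by (intro mult_nonneg_nonneg) auto
  finally show ?thesis
    by simp
qed

lemma cubic_model_stationary_point:
  fixes L s :: real
  assumes L: "L > 0" and s: "s \<ge> 0"
  defines "r \<equiv> (sqrt (1 + 2 * L * s) - 1) / L"
  shows "r \<ge> 0" and "s = r + L * r^2 / 2"
proof -
  have "sqrt (1 + 2 * L * s) = 1 + L * r"
    using L by (simp add: r_def)
  moreover have "(sqrt (1 + 2 * L * s))^2 = 1 + 2 * L * s"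
    using L s by simp
  ultimately have "L * (2 * s) = L * (2 * r + L * r^2)"
    by (simp add: power2_eq_square algebra_simps)
  then show "s = r + L * r^2 / 2"
    using L by simp
  show "r \<ge> 0"
    using L s by (simp add: r_def)
qed

lemma accelerated_recursion_step:
  fixes q C :: real
  assumes q: "q \<ge> 3" and C: "C \<ge> 0"
  shows "(1 - 3 / q) * (27 * C / (q - 1)^2) + (3 / q)^3 * C \<le> 27 * C / q^2"
proof -
  have "q \<noteq> 0" "q - 1 \<noteq> 0"
    using q by auto
  then have "1 / q^2 - ((1 - 3 / q) / (q - 1)^2 + 1 / q^3) = (3 * q - 1) / (q^3 * (q - 1)^2)"
    by (simp add: divide_simps) algebra
  also have "\<dots> \<ge> 0"
    using q by simp
  finally have "27 * C * ((1 - 3 / q) / (q - 1)^2 + 1 / q^3) \<le> 27 * C * (1 / q^2)"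
    using C by (intro mult_left_mono) auto
  then show ?thesis
    by (simp add: distrib_left power_divide mult.commute)
qed

lemma accelerated_recursion_rate:
  fixes a :: "nat \<Rightarrow> real"
  assumes C: "C \<ge> 0"
    and rec: "\<And>t \<eta>. t < n \<Longrightarrow> 0 \<le> \<eta> \<Longrightarrow> \<eta> \<le> 1 \<Longrightarrow> a (Suc t) \<le> (1 - \<eta>) * a t + \<eta>^3 * C"
    and t: "1 \<le> t" "t \<le> n"
  shows "a t \<le> 27 * C / (real t + 1)^2"
  using t
proof (induction t rule: dec_induct)
  case base
  have "a (Suc 0) \<le> (1 - 1) * a 0 + 1^3 * C"
    by (rule rec) (use base in auto)
  then show ?case
    using C by simp
next
  case (step t)
  define q where "q = real t + 2"
  have q: "q \<ge> 3"
    using step.hyps by (simp add: q_def)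
  have "a (Suc t) \<le> (1 - 3 / q) * a t + (3 / q)^3 * C"
    by (rule rec) (use step q in auto)
  also have "\<dots> \<le> (1 - 3 / q) * (27 * C / (q - 1)^2) + (3 / q)^3 * C"
  proof -
    have "a t \<le> 27 * C / (q - 1)^2"
      using step by (simp add: q_def add_ac)
    then show ?thesis
      using q by (intro add_right_mono mult_left_mono) auto
  qed
  also have "\<dots> \<le> 27 * C / q^2"
    by (rule accelerated_recursion_step [OF q C])
  finally show ?case
    by (simp add: q_def add_ac)
qed

lemma matrix_inv_inverse:
  fixes A :: "'a::semiring_1^'n^'n"
  assumes "invertible A"
  shows "A ** matrix_inv A = mat 1" and "matrix_inv A ** A = mat 1"
proof -
  obtain A' where "A ** A' = mat 1 \<and> A' ** A = mat 1"
    using assms unfolding invertible_def by blast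
  then have "A ** matrix_inv A = mat 1 \<and> matrix_inv A ** A = mat 1"
    unfolding matrix_inv_def by (rule someI)
  then show "A ** matrix_inv A = mat 1" and "matrix_inv A ** A = mat 1"
    by simp_all
qed

lemma bdd_above_continuous_image_bounded:
  fixes g :: "'a::heine_borel \<Rightarrow> real"
  assumes "continuous_on UNIV g" and "bounded S"
  shows "bdd_above (g ` S)"
proof -
  have "compact (g ` closure S)"
    by (rule compact_continuous_image [OF continuous_on_subset [OF assms(1)]]) (use assms(2) in auto)
  then have "bdd_above (g ` closure S)"
    by (simp add: bounded_imp_bdd_above compact_imp_bounded)
  moreover have "g ` S \<subseteq> g ` closure S"
    by (simp add: closure_subset image_mono)
  ultimately show ?thesis
    by (rule bdd_above_mono)
qed

locale pd_matrix_field =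
  fixes H :: "real^'n \<Rightarrow> real^'n^'n"
  assumes pos_def: "\<And>x v. v \<noteq> 0 \<Longrightarrow> v \<bullet> (H x *v v) > 0"
    and symmetric: "\<And>x u v. (H x *v u) \<bullet> v = u \<bullet> (H x *v v)"
begin

lemma quadratic_form_nonneg: "v \<bullet> (H x *v v) \<ge> 0"
  by (cases "v = 0") (auto intro: less_imp_le pos_def)

lemma loc_norm_squared: "(loc_norm H x h)^2 = h \<bullet> (H x *v h)"
  unfolding loc_norm_def by (rule real_sqrt_pow2 [OF quadratic_form_nonneg])

lemma loc_norm_nonneg: "loc_norm H x h \<ge> 0"
  unfolding loc_norm_def by (rule real_sqrt_ge_zero [OF quadratic_form_nonneg])

lemma loc_norm_pos: "h \<noteq> 0 \<Longrightarrow> loc_norm H x h > 0"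
  unfolding loc_norm_def using pos_def by simp

lemma loc_norm_zero [simp]: "loc_norm H x 0 = 0"
  by (simp add: loc_norm_def)

lemma loc_norm_scaleR: "loc_norm H x (c *\<^sub>R h) = \<bar>c\<bar> * loc_norm H x h"
proof -
  have "(c *\<^sub>R h) \<bullet> (H x *v (c *\<^sub>R h)) = c^2 * (h \<bullet> (H x *v h))"
    by (simp add: matrix_vector_mult_scaleR power2_eq_square)
  then show ?thesis
    unfolding loc_norm_def by (simp add: real_sqrt_mult)
qed

lemma invertible_H: "invertible (H x)"
proof -
  have "inj ((*v) (H x))"
  proof (rule injI)
    fix u w
    assume "H x *v u = H x *v w"
    then have "(u - w) \<bullet> (H x *v (u - w)) = 0"
      by (simp add: matrix_vector_mult_diff_distrib)
    then show "u = w"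
      using pos_def [of "u - w" x] by (cases "u = w") auto
  qed
  then obtain B where "B ** H x = mat 1"
    using matrix_left_invertible_injective by blast
  then show ?thesis
    using invertible_left_inverse by blast
qed

lemma mult_matrix_inv [simp]: "H x *v (matrix_inv (H x) *v g) = g"
  using matrix_inv_inverse [OF invertible_H] by (simp add: matrix_vector_mul_assoc)

lemma matrix_inv_mult [simp]: "matrix_inv (H x) *v (H x *v p) = p"
  using matrix_inv_inverse [OF invertible_H] by (simp add: matrix_vector_mul_assoc)

lemma loc_norm_Cauchy_Schwarz: "\<bar>(H x *v p) \<bullet> h\<bar> \<le> loc_norm H x p * loc_norm H x h"
proof (cases "p = 0")
  case False
  define a b c where "a = p \<bullet> (H x *v p)" and "b = h \<bullet> (H x *v h)" and "c = (H x *v p) \<bullet> h"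
  have a: "a > 0"
    using pos_def [OF False] by (simp add: a_def)
  have "0 \<le> ((- c / a) *\<^sub>R p + h) \<bullet> (H x *v ((- c / a) *\<^sub>R p + h))"
    by (rule quadratic_form_nonneg)
  also have "\<dots> = (c / a)^2 * a - 2 * (c / a) * c + b"
    using symmetric [of x p h] unfolding a_def b_def c_def
    by (simp add: matrix_vector_right_distrib matrix_vector_mult_scaleR inner_add_left
        inner_add_right inner_commute [of h "H x *v p"] power2_eq_square algebra_simps)
  also have "\<dots> = b - c^2 / a"
    using a by (simp add: power2_eq_square field_simps)
  finally have "c^2 \<le> a * b"
    using a by (simp add: field_simps)
  then have "sqrt (c^2) \<le> sqrt (a * b)"
    by (rule real_sqrt_le_mono)
  then show ?thesis
    unfolding loc_norm_def a_def b_def c_def by (simp add: real_sqrt_mult)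
qed simp

lemma dual_norm_mult: "dual_norm H x (H x *v p) = loc_norm H x p"
  unfolding dual_norm_def loc_norm_def by (simp add: inner_commute)

lemma dual_norm_inner_bound: "\<bar>g \<bullet> h\<bar> \<le> dual_norm H x g * loc_norm H x h"
  using loc_norm_Cauchy_Schwarz [of x "matrix_inv (H x) *v g" h]
  by (simp add: dual_norm_mult [of x "matrix_inv (H x) *v g", simplified])

lemma dual_norm_scaleR: "dual_norm H x (c *\<^sub>R g) = \<bar>c\<bar> * dual_norm H x g"
  using dual_norm_mult [of x "c *\<^sub>R (matrix_inv (H x) *v g)"]
    dual_norm_mult [of x "matrix_inv (H x) *v g"]
  by (simp add: matrix_vector_mult_scaleR loc_norm_scaleR)

lemma op_norm_bdd_above:
  "bdd_above ((\<lambda>v. dual_norm H x (M *v v) / loc_norm H x v) ` {v. v \<noteq> 0})"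
proof -
  define r where "r v = dual_norm H x (M *v v) / loc_norm H x v" for v
  have "continuous_on (sphere 0 1) r"
    unfolding r_def dual_norm_def loc_norm_def
    by (intro continuous_intros bounded_linear.continuous_on [OF matrix_vector_mul_bounded_linear])
      (auto simp: loc_norm_def; metis norm_zero pos_def zero_neq_one less_irrefl)
  then have "compact (r ` sphere 0 1)"
    by (rule compact_continuous_image [OF _ compact_sphere])
  then have "bdd_above (r ` sphere 0 1)"
    by (simp add: bounded_imp_bdd_above compact_imp_bounded)
  moreover have "r ` {v. v \<noteq> 0} \<subseteq> r ` sphere 0 1"
  proof
    fix y
    assume "y \<in> r ` {v. v \<noteq> 0}"
    then obtain v where v: "v \<noteq> 0" "y = r v"
      by auto
    define u where "u = (1 / norm v) *\<^sub>R v"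
    have "u \<in> sphere 0 1"
      using v by (simp add: u_def)
    moreover have "r u = r v"
      using v loc_norm_pos [OF v(1), of x]
      by (simp add: r_def u_def matrix_vector_mult_scaleR dual_norm_scaleR loc_norm_scaleR)
    ultimately show "y \<in> r ` sphere 0 1"
      using v by (metis image_eqI)
  qed
  ultimately show ?thesis
    unfolding r_def [abs_def] by (rule bdd_above_mono)
qed

lemma dual_norm_le_op_norm: "dual_norm H x (M *v v) \<le> op_norm H x M * loc_norm H x v"
proof (cases "v = 0")
  case False
  have "dual_norm H x (M *v v) / loc_norm H x v \<le> op_norm H x M"
    unfolding op_norm_def by (rule cSUP_upper) (use False op_norm_bdd_above in auto)
  then show ?thesis
    using loc_norm_pos [OF False, of x] by (simp add: divide_le_eq)
qed (simp add: dual_norm_def)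

lemma semi_strongly_sc_quadratic_form:
  assumes "semi_strongly_sc H L"
  shows "\<bar>h \<bullet> ((H y - H x) *v h)\<bar> \<le> L * loc_norm H x (y - x) * (loc_norm H x h)^2"
proof -
  have "\<bar>((H y - H x) *v h) \<bullet> h\<bar> \<le> dual_norm H x ((H y - H x) *v h) * loc_norm H x h"
    by (rule dual_norm_inner_bound)
  also have "\<dots> \<le> op_norm H x (H y - H x) * loc_norm H x h * loc_norm H x h"
    by (intro mult_right_mono dual_norm_le_op_norm loc_norm_nonneg)
  also have "\<dots> \<le> L * loc_norm H x (y - x) * loc_norm H x h * loc_norm H x h"
    using assms unfolding semi_strongly_sc_def by (intro mult_right_mono loc_norm_nonneg) auto
  finally show ?thesis
    by (simp add: inner_commute power2_eq_square mult.assoc)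
qed

lemma semi_strongly_sc_loc_norm_le:
  assumes "semi_strongly_sc H Ls" and "Ls \<le> L"
  shows "loc_norm H y (y - z) \<le> sqrt ((loc_norm H z (y - z))^2 + L * (loc_norm H z (y - z))^3)"
proof -
  define h \<rho> where "h = y - z" and "\<rho> = loc_norm H z (y - z)"
  have "h \<bullet> (H y *v h) = \<rho>^2 + h \<bullet> ((H y - H z) *v h)"
    by (simp add: h_def \<rho>_def loc_norm_squared matrix_vector_mult_diff_rdistrib inner_diff_right)
  also have "\<dots> \<le> \<rho>^2 + Ls * \<rho>^3"
    using semi_strongly_sc_quadratic_form [OF assms(1), of h y z]
    by (simp add: h_def \<rho>_def power2_eq_square power3_eq_cube)
  also have "\<dots> \<le> \<rho>^2 + L * \<rho>^3"
    using assms(2) loc_norm_nonneg [of z "y - z"] by (simp add: \<rho>_def mult_right_mono)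
  finally show ?thesis
    unfolding loc_norm_def h_def \<rho>_def by (rule real_sqrt_le_mono)
qed

end

locale twice_continuously_differentiable =
  fixes f :: "real^'n \<Rightarrow> real" and G :: "real^'n \<Rightarrow> real^'n"
    and H :: "real^'n \<Rightarrow> real^'n^'n"
  assumes gradient: "\<And>x. (f has_derivative (\<lambda>h. G x \<bullet> h)) (at x)"
    and hessian: "\<And>x. (G has_derivative (\<lambda>h. H x *v h)) (at x)"
    and hessian_continuous: "continuous_on UNIV H"
begin

lemma has_real_derivative_along_line:
  "((\<lambda>t. f (x + t *\<^sub>R h)) has_real_derivative G (x + t *\<^sub>R h) \<bullet> h) (at t)"
proof -
  have "((\<lambda>t. x + t *\<^sub>R h) has_derivative (\<lambda>s. s *\<^sub>R h)) (at t)"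
    by (rule derivative_eq_intros refl | simp)+
  from has_derivative_compose [OF this gradient] show ?thesis
    by (rule has_derivative_imp_has_field_derivative) simp
qed

lemma gradient_has_real_derivative_along_line:
  "((\<lambda>t. G (x + t *\<^sub>R h) \<bullet> u) has_real_derivative (H (x + t *\<^sub>R h) *v h) \<bullet> u) (at t)"
proof -
  have "((\<lambda>t. x + t *\<^sub>R h) has_derivative (\<lambda>s. s *\<^sub>R h)) (at t)"
    by (rule derivative_eq_intros refl | simp)+
  from has_derivative_inner_left [OF has_derivative_compose [OF this hessian]] show ?thesis
    by (rule has_derivative_imp_has_field_derivative) (simp add: matrix_vector_mult_scaleR)
qed

lemma second_difference_mean_value:
  assumes e: "e > 0"
  obtains y where "norm (y - x) \<le> e * (norm u + norm v)"
    and "f (x + e *\<^sub>R u + e *\<^sub>R v) - f (x + e *\<^sub>R u) - f (x + e *\<^sub>R v) + f x = e^2 * ((H y *v v) \<bullet> u)"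
proof -
  define r where "r s = f (x + e *\<^sub>R v + s *\<^sub>R u) - f (x + s *\<^sub>R u)" for s
  define r' where "r' s = G (x + e *\<^sub>R v + s *\<^sub>R u) \<bullet> u - G (x + s *\<^sub>R u) \<bullet> u" for s
  have "(r has_real_derivative r' s) (at s)" for s
    unfolding r_def [abs_def] r'_def by (intro DERIV_diff has_real_derivative_along_line)
  then obtain z where z: "0 < z" "z < e" and rz: "r e - r 0 = (e - 0) * r' z"
    using MVT2 [OF e, of r r'] by blast
  define w where "w t = G (x + z *\<^sub>R u + t *\<^sub>R v) \<bullet> u" for t
  define w' where "w' t = (H (x + z *\<^sub>R u + t *\<^sub>R v) *v v) \<bullet> u" for t
  have "(w has_real_derivative w' t) (at t)" for t
    unfolding w_def [abs_def] w'_def by (rule gradient_has_real_derivative_along_line)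
  then obtain t where t: "0 < t" "t < e" and wt: "w e - w 0 = (e - 0) * w' t"
    using MVT2 [OF e, of w w'] by blast
  show ?thesis
  proof
    have "norm (z *\<^sub>R u + t *\<^sub>R v) \<le> z * norm u + t * norm v"
      using norm_triangle_ineq [of "z *\<^sub>R u" "t *\<^sub>R v"] z t by simp
    also have "\<dots> \<le> e * (norm u + norm v)"
      using z t by (simp add: distrib_left add_mono mult_right_mono)
    finally show "norm (x + z *\<^sub>R u + t *\<^sub>R v - x) \<le> e * (norm u + norm v)"
      by (simp add: add.assoc)
    have "f (x + e *\<^sub>R u + e *\<^sub>R v) - f (x + e *\<^sub>R u) - f (x + e *\<^sub>R v) + f x = r e - r 0"
      by (simp add: r_def add_ac)
    also have "\<dots> = e * (w e - w 0)"
      by (simp add: rz r'_def w_def add_ac)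
    finally show "f (x + e *\<^sub>R u + e *\<^sub>R v) - f (x + e *\<^sub>R u) - f (x + e *\<^sub>R v) + f x
        = e^2 * ((H (x + z *\<^sub>R u + t *\<^sub>R v) *v v) \<bullet> u)"
      by (simp add: wt w'_def power2_eq_square)
  qed
qed

lemma continuous_hessian_form: "isCont (\<lambda>y. (H y *v v) \<bullet> u) x"
proof -
  have "bounded_linear (\<lambda>M::real^'n^'n. (M *v v) \<bullet> u)"
    unfolding linear_conv_bounded_linear [symmetric]
    by (rule linearI) (simp_all add: matrix_vector_mult_add_rdistrib inner_add_left
        scaleR_matrix_vector_assoc [symmetric])
  then have "isCont (\<lambda>M::real^'n^'n. (M *v v) \<bullet> u) (H x)"
    by (rule linear_continuous_at)
  moreover have "isCont H x"
    using hessian_continuous by (simp add: continuous_on_eq_continuous_at)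
  ultimately show ?thesis
    by (rule isCont_o2 [rotated])
qed

lemma second_difference_quotient_tendsto:
  "((\<lambda>e. (f (x + e *\<^sub>R u + e *\<^sub>R v) - f (x + e *\<^sub>R u) - f (x + e *\<^sub>R v) + f x) / e^2)
     \<longlongrightarrow> (H x *v v) \<bullet> u) (at_right 0)"
proof -
  have "\<forall>e. \<exists>y. e > 0 \<longrightarrow> norm (y - x) \<le> e * (norm u + norm v) \<and>
      f (x + e *\<^sub>R u + e *\<^sub>R v) - f (x + e *\<^sub>R u) - f (x + e *\<^sub>R v) + f x = e^2 * ((H y *v v) \<bullet> u)"
    by (meson second_difference_mean_value)
  then obtain y where y: "\<And>e. e > 0 \<Longrightarrow> norm (y e - x) \<le> e * (norm u + norm v) \<and>
      f (x + e *\<^sub>R u + e *\<^sub>R v) - f (x + e *\<^sub>R u) - f (x + e *\<^sub>R v) + f x = e^2 * ((H (y e) *v v) \<bullet> u)"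
    unfolding choice_iff by blast
  have "((\<lambda>e. y e - x) \<longlongrightarrow> 0) (at_right 0)"
  proof (rule Lim_null_comparison)
    show "\<forall>\<^sub>F e in at_right 0. norm (y e - x) \<le> e * (norm u + norm v)"
      using eventually_at_right_less [of 0] by eventually_elim (use y in blast)
    show "((\<lambda>e. e * (norm u + norm v)) \<longlongrightarrow> 0) (at_right (0::real))"
      by (auto intro!: tendsto_eq_intros)
  qed
  then have "((\<lambda>e. (H (y e) *v v) \<bullet> u) \<longlongrightarrow> (H x *v v) \<bullet> u) (at_right 0)"
    by (intro isCont_tendsto_compose [OF continuous_hessian_form]) (simp add: LIM_zero_iff)
  moreover have "\<forall>\<^sub>F e in at_right 0. (H (y e) *v v) \<bullet> u
      = (f (x + e *\<^sub>R u + e *\<^sub>R v) - f (x + e *\<^sub>R u) - f (x + e *\<^sub>R v) + f x) / e^2"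
    using eventually_at_right_less [of 0] by eventually_elim (use y in simp)
  ultimately show ?thesis
    by (rule Lim_transform_eventually)
qed

lemma hessian_symmetric: "(H x *v u) \<bullet> v = u \<bullet> (H x *v v)"
proof -
  have "(H x *v u) \<bullet> v = (H x *v v) \<bullet> u"
    using second_difference_quotient_tendsto [of x u v] second_difference_quotient_tendsto [of x v u]
    by (intro tendsto_unique [OF trivial_limit_at_right_real]) (simp_all add: algebra_simps)
  then show ?thesis
    by (simp add: inner_commute)
qed

end

locale semi_strongly_self_concordant = twice_continuously_differentiable f G H
  for f :: "real^'n \<Rightarrow> real" and G H +
  fixes Ls :: real
  assumes hessian_pos_def: "\<And>x v. v \<noteq> 0 \<Longrightarrow> v \<bullet> (H x *v v) > 0"
    and semi_strongly_sc: "semi_strongly_sc H Ls"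

sublocale semi_strongly_self_concordant \<subseteq> pd_matrix_field H
  by unfold_locales (simp_all add: hessian_pos_def hessian_symmetric)

context semi_strongly_self_concordant
begin

lemma cubic_taylor_estimate:
  "\<bar>f (x + h) - f x - G x \<bullet> h - (loc_norm H x h)^2 / 2\<bar> \<le> Ls * (loc_norm H x h)^3 / 6"
proof -
  have "\<bar>(\<lambda>t. f (x + t *\<^sub>R h)) 1 - (\<lambda>t. f (x + t *\<^sub>R h)) 0 - (\<lambda>t. G (x + t *\<^sub>R h) \<bullet> h) 0
      - (loc_norm H x h)^2 / 2\<bar> \<le> Ls * (loc_norm H x h)^3 / 6"
  proof (rule cubic_taylor_bound [where p'' = "\<lambda>t. (H (x + t *\<^sub>R h) *v h) \<bullet> h"])
    fix t :: real
    assume t: "t \<in> {0..1}"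
    have "\<bar>h \<bullet> ((H (x + t *\<^sub>R h) - H x) *v h)\<bar> \<le> Ls * (loc_norm H x h)^3 * t"
      using semi_strongly_sc_quadratic_form [OF semi_strongly_sc, of h "x + t *\<^sub>R h" x] t
      by (simp add: loc_norm_scaleR power2_eq_square power3_eq_cube ac_simps)
    moreover have "h \<bullet> ((H (x + t *\<^sub>R h) - H x) *v h) = (H (x + t *\<^sub>R h) *v h) \<bullet> h - (loc_norm H x h)^2"
      by (simp add: loc_norm_squared matrix_vector_mult_diff_rdistrib inner_diff_right inner_commute)
    ultimately show "\<bar>(H (x + t *\<^sub>R h) *v h) \<bullet> h - (loc_norm H x h)^2\<bar> \<le> Ls * (loc_norm H x h)^3 * t"
      by simp
  qed (rule has_real_derivative_along_line gradient_has_real_derivative_along_line)+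
  then show ?thesis
    by simp
qed

(* The AICN step has local length r, the minimiser over r >= 0 of the cubic model
   -s r + r^2/2 + L r^3/6 with s the dual norm of the gradient. Since the linear term of the
   model at any h is at least -s |h|_x, the step does at least as well as every h. *)

lemma aicn_step_le_cubic_model:
  assumes L: "L > 0" "Ls \<le> L"
  shows "f (aicn_step G H L x) \<le> f x + G x \<bullet> h + (loc_norm H x h)^2 / 2 + L * (loc_norm H x h)^3 / 6"
proof (cases "G x = 0")
  case True
  have "0 \<le> (loc_norm H x h)^2 / 2 + L * (loc_norm H x h)^3 / 6"
    using L(1) loc_norm_nonneg [of x h] by simp
  then show ?thesis
    using True by (simp add: aicn_step_def aicn_alpha_def)
next
  case False
  define s p where "s = dual_norm H x (G x)" and "p = matrix_inv (H x) *v G x"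
  have Gp: "G x = H x *v p"
    by (simp add: p_def)
  have s: "s = loc_norm H x p"
    using dual_norm_mult [of x p] by (simp add: s_def Gp)
  have "s > 0"
    using False Gp loc_norm_pos [of p x] by (cases "p = 0") (auto simp: s)
  define r where "r = (sqrt (1 + 2 * L * s) - 1) / L"
  have r: "r \<ge> 0" "s = r + L * r^2 / 2"
    using cubic_model_stationary_point [OF L(1), of s] \<open>s > 0\<close> by (simp_all add: r_def)
  define h0 where "h0 = (- (r / s)) *\<^sub>R p"
  have step: "aicn_step G H L x = x + h0"
    using False L(1) \<open>s > 0\<close>
    by (simp add: aicn_step_def aicn_alpha_def h0_def p_def r_def s_def[symmetric])
  have "loc_norm H x h0 = r"
    using loc_norm_scaleR [of x "- (r / s)" p] r(1) \<open>s > 0\<close> by (simp add: h0_def s [symmetric])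
  moreover have "G x \<bullet> h0 = - s * r"
  proof -
    have "G x \<bullet> p = s^2"
      by (simp add: Gp s loc_norm_squared inner_commute)
    then show ?thesis
      using \<open>s > 0\<close> by (simp add: h0_def power2_eq_square)
  qed
  ultimately have "f (x + h0) \<le> f x - s * r + r^2 / 2 + Ls * r^3 / 6"
    using abs_le_D1 [OF cubic_taylor_estimate [of x h0]] by simp
  also have "\<dots> \<le> f x - s * r + r^2 / 2 + L * r^3 / 6"
    using L(2) r(1) by (simp add: mult_right_mono)
  also have "\<dots> \<le> f x - s * loc_norm H x h + (loc_norm H x h)^2 / 2 + L * (loc_norm H x h)^3 / 6"
    using cubic_model_minimum [OF less_imp_le [OF L(1)] r(1) loc_norm_nonneg [of x h] r(2)] by linarith
  also have "\<dots> \<le> f x + G x \<bullet> h + (loc_norm H x h)^2 / 2 + L * (loc_norm H x h)^3 / 6"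
    using dual_norm_inner_bound [of "G x" h x] by (simp add: s_def abs_le_iff)
  finally show ?thesis
    by (simp add: step)
qed

lemma aicn_step_descent:
  assumes "L > 0" "Ls \<le> L"
  shows "f (aicn_step G H L x) \<le> f x"
  using aicn_step_le_cubic_model [OF assms, of x 0] by simp

lemma aicn_in_level_set:
  assumes "L > 0" "Ls \<le> L"
  shows "f (aicn G H L x0 t) \<le> f x0"
  by (induction t) (use aicn_step_descent [OF assms] order_trans in auto)

lemma aicn_step_convex_bound:
  assumes convex: "convex_on UNIV f" and L: "L > 0" "Ls \<le> L" and \<eta>: "0 \<le> \<eta>" "\<eta> \<le> 1"
  shows "f (aicn_step G H L x) - f y \<le> (1 - \<eta>) * (f x - f y) + L / 3 * \<eta>^3 * (loc_norm H x (x - y))^3"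
proof -
  define h where "h = \<eta> *\<^sub>R (y - x)"
  have "loc_norm H x h = \<eta> * loc_norm H x (x - y)"
    using loc_norm_scaleR [of x "- \<eta>" "x - y"] \<eta> by (simp add: h_def algebra_simps)
  then have h3: "(loc_norm H x h)^3 = \<eta>^3 * (loc_norm H x (x - y))^3"
    by (simp add: power_mult_distrib)
  have "f (aicn_step G H L x) \<le> f x + G x \<bullet> h + (loc_norm H x h)^2 / 2 + L * (loc_norm H x h)^3 / 6"
    by (rule aicn_step_le_cubic_model [OF L])
  moreover have "f x + G x \<bullet> h + (loc_norm H x h)^2 / 2 - Ls * (loc_norm H x h)^3 / 6 \<le> f (x + h)"
    using abs_le_D2 [OF cubic_taylor_estimate [of x h]] by linarith
  moreover have "f (x + h) \<le> (1 - \<eta>) * f x + \<eta> * f y"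
    using convex_onD [OF convex, of \<eta> x y] \<eta> by (simp add: h_def algebra_simps)
  moreover have "Ls * (loc_norm H x h)^3 \<le> L * (loc_norm H x h)^3"
    using L(2) loc_norm_nonneg [of x h] by (simp add: mult_right_mono)
  ultimately have "f (aicn_step G H L x) \<le> (1 - \<eta>) * f x + \<eta> * f y + L * (loc_norm H x h)^3 / 3"
    by linarith
  then show ?thesis
    by (simp add: h3 algebra_simps)
qed

lemma aicn_rate:
  assumes convex: "convex_on UNIV f" and L: "L > 0" "Ls \<le> L" and k: "k \<ge> 1"
  shows "f (aicn G H L x0 (k + 1)) - f y
    \<le> 9 * L * (MAX t\<in>{0..k+1}. loc_norm H (aicn G H L x0 t) (aicn G H L x0 t - y))^3 / (real k)^2"
proof -
  define X where "X t = aicn G H L x0 t" for t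
  define D where "D = (MAX t\<in>{0..k+1}. loc_norm H (X t) (X t - y))"
  have D: "loc_norm H (X t) (X t - y) \<le> D" if "t \<le> k + 1" for t
    unfolding D_def using that by (intro Max_ge) auto
  have "D \<ge> 0"
    using D [of 0] loc_norm_nonneg [of "X 0" "X 0 - y"] by simp
  have "f (X (k + 1)) - f y \<le> 27 * (L * D^3 / 3) / (real (k + 1) + 1)^2"
  proof (rule accelerated_recursion_rate [where a = "\<lambda>t. f (X t) - f y" and n = "k + 1"])
    fix t :: nat and \<eta> :: real
    assume "t < k + 1" "0 \<le> \<eta>" "\<eta> \<le> 1"
    have "(loc_norm H (X t) (X t - y))^3 \<le> D^3"
      using D [of t] \<open>t < k + 1\<close> loc_norm_nonneg by (simp add: power_mono)
    then have "L / 3 * \<eta>^3 * (loc_norm H (X t) (X t - y))^3 \<le> \<eta>^3 * (L * D^3 / 3)"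
      using L(1) \<open>0 \<le> \<eta>\<close> by (simp add: mult_left_mono)
    then show "f (X (Suc t)) - f y \<le> (1 - \<eta>) * (f (X t) - f y) + \<eta>^3 * (L * D^3 / 3)"
      using aicn_step_convex_bound [OF convex L \<open>0 \<le> \<eta>\<close> \<open>\<eta> \<le> 1\<close>, of "X t" y]
      by (simp add: X_def)
  qed (use L(1) \<open>D \<ge> 0\<close> k in auto)
  also have "\<dots> \<le> 9 * L * D^3 / (real k)^2"
    using L(1) \<open>D \<ge> 0\<close> k by (simp add: frac_le power_mono)
  finally show ?thesis
    by (simp add: X_def D_def)
qed

lemma aicn_loc_norm_le_level_set_radius:
  assumes L: "L > 0" "Ls \<le> L" and bounded: "bounded {x. f x \<le> f x0}"
  shows "loc_norm H (aicn G H L x0 t) (aicn G H L x0 t - y)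
    \<le> (SUP x\<in>{x. f x \<le> f x0}. sqrt ((loc_norm H y (x - y))^2 + L * (loc_norm H y (x - y))^3))"
proof (rule order_trans [OF semi_strongly_sc_loc_norm_le [OF semi_strongly_sc L(2)]])
  have "bdd_above ((\<lambda>x. sqrt ((loc_norm H y (x - y))^2 + L * (loc_norm H y (x - y))^3)) ` {x. f x \<le> f x0})"
    unfolding loc_norm_def
    by (intro bdd_above_continuous_image_bounded bounded continuous_intros
        bounded_linear.continuous_on [OF matrix_vector_mul_bounded_linear])
  then show "sqrt ((loc_norm H y (aicn G H L x0 t - y))^2 + L * (loc_norm H y (aicn G H L x0 t - y))^3)
    \<le> (SUP x\<in>{x. f x \<le> f x0}. sqrt ((loc_norm H y (x - y))^2 + L * (loc_norm H y (x - y))^3))"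
    using aicn_in_level_set [OF L, of x0 t] by (intro cSUP_upper) auto
qed

end

theorem theorem6:
  fixes f :: "real^'n \<Rightarrow> real" and G :: "real^'n \<Rightarrow> real^'n"
    and H :: "real^'n \<Rightarrow> real^'n^'n"
    and L_semi L_est :: real and x0 xs :: "real^'n" and k :: nat
  assumes convex: "convex_on UNIV f"
    and grad: "\<And>x. (f has_derivative (\<lambda>h. G x \<bullet> h)) (at x)"
    and hess: "\<And>x. (G has_derivative (\<lambda>h. H x *v h)) (at x)"
    and hess_cont: "continuous_on UNIV H"
    and hess_pd: "\<And>x v. v \<noteq> 0 \<Longrightarrow> v \<bullet> (H x *v v) > 0"
    and ssc: "semi_strongly_sc H L_semi"
    and L_pos: "L_est > 0"
    and L_ge: "L_est \<ge> L_semi"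
    and xs_min: "\<And>y. f xs \<le> f y"
    and xs_unique: "\<And>y. (\<forall>z. f y \<le> f z) \<Longrightarrow> y = xs"
    and level_bdd: "bounded {x. f x \<le> f x0}"
    and k: "k \<ge> 1"
  shows "f (aicn G H L_est x0 (k + 1)) - f xs
           \<le> 9 * L_est * (MAX t\<in>{0..k+1}. loc_norm H (aicn G H L_est x0 t) (aicn G H L_est x0 t - xs)) ^ 3 / (real k)^2
       \<and> 9 * L_est * (MAX t\<in>{0..k+1}. loc_norm H (aicn G H L_est x0 t) (aicn G H L_est x0 t - xs)) ^ 3 / (real k)^2
           \<le> 9 * L_est * (SUP x\<in>{x. f x \<le> f x0}. sqrt ((loc_norm H xs (x - xs))^2 + L_est * (loc_norm H xs (x - xs))^3)) ^ 3 / (real k)^2"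
proof -
  interpret semi_strongly_self_concordant f G H L_semi
    using grad hess hess_cont hess_pd ssc by unfold_locales auto
  define D where "D = (MAX t\<in>{0..k+1}. loc_norm H (aicn G H L_est x0 t) (aicn G H L_est x0 t - xs))"
  define R where "R = (SUP x\<in>{x. f x \<le> f x0}. sqrt ((loc_norm H xs (x - xs))^2 + L_est * (loc_norm H xs (x - xs))^3))"
  have "D \<le> R"
    unfolding D_def R_def
    using aicn_loc_norm_le_level_set_radius [OF L_pos L_ge level_bdd] by (intro Max.boundedI) auto
  moreover have "0 \<le> D"
    unfolding D_def by (rule order_trans [OF loc_norm_nonneg Max_ge]) auto
  ultimately have "9 * L_est * D^3 / (real k)^2 \<le> 9 * L_est * R^3 / (real k)^2"
    using L_pos by (intro divide_right_mono mult_left_mono power_mono) auto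
  then show ?thesis
    using aicn_rate [OF convex L_pos L_ge k, of x0 xs] by (simp add: D_def R_def)
qed

end
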